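(* Let $\mathcal{B}$ be a $d$-dimensional manifold with a torsion-free flat connection $\nabla$ and $F\in C^\infty(\mathcal{B})$. Then $F$ satisfies Condition N at every point of $\mathcal{B}$ if and only if $F$ satisfies the Regular resonant set condition.
   Context: $\mathcal{K}_b=\ker dF_b$. Condition N at $b$: $X\in\mathcal{K}_b$ and $\nabla_X\nabla F=0$ at $b$ imply $X=0$. For a parallel vector field $X$ on an open set $\mathcal{O}\subset\mathcal{B}$, $\Omega_X=dF(X)\in C^\infty(\mathcal{O})$ and the resonant set is $\Sigma_X=\{c\in\mathcal{O}:\Omega_X(c)=0\}$. Regular resonant set condition: for every open set $\mathcal{O}\subset\mathcal{B}$, every non-vanishing parallel vector field $X$ on $\mathcal{O}$ and every point $b\in\Sigma_X$, one has $d(\Omega_X)_b\neq0$ (so that each $\Sigma_X$ is a codimension-one submanifold). *)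

theory Defs
  imports "HOL-Analysis.Analysis"
begin

fun Ck_on :: "nat \<Rightarrow> (real^('n::finite)) set \<Rightarrow> (real^'n \<Rightarrow> real) \<Rightarrow> bool" where
  "Ck_on 0 S f = continuous_on S f"
| "Ck_on (Suc k) S f = (f differentiable_on S \<and> continuous_on S f \<and>
      (\<forall>v. Ck_on k S (\<lambda>y. frechet_derivative f (at y) v)))"

definition smooth_on :: "(real^'n) set \<Rightarrow> (real^'n \<Rightarrow> real) \<Rightarrow> bool" where
  "smooth_on S f \<longleftrightarrow> (\<forall>k. Ck_on k S f)"

text \<open>A d-dimensional manifold with a torsion-free flat connection is modelled by an
  affine atlas: charts into real^'n (d = CARD('n)) whose transition maps are locally affine.
  The affine (flat, torsion-free) connection is the one whose Christoffel symbols
  vanish in these charts.\<close>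

type_synonym ('a,'n) chart = "'a set \<times> ('a \<Rightarrow> real^'n)"

definition affine_atlas :: "('a::topological_space, 'n::finite) chart set \<Rightarrow> bool" where
  "affine_atlas A \<longleftrightarrow>
     (\<forall>(U,\<phi>)\<in>A. open U \<and> open (\<phi> ` U) \<and> homeomorphism U (\<phi> ` U) \<phi> (inv_into U \<phi>)) \<and>
     (\<Union>(fst ` A) = UNIV) \<and>
     (\<forall>(U,\<phi>)\<in>A. \<forall>(V,\<psi>)\<in>A. \<forall>x\<in>U \<inter> V. \<exists>W L c. open W \<and> x \<in> W \<and> linear L \<and> bij L \<and>
         (\<forall>y\<in>W \<inter> U \<inter> V. \<psi> y = L (\<phi> y) + c))"

definition loc :: "('a, 'n::finite) chart \<Rightarrow> ('a \<Rightarrow> real) \<Rightarrow> real^'n \<Rightarrow> real" where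
  "loc c F = F \<circ> inv_into (fst c) (snd c)"

definition smooth_fun :: "('a::topological_space, 'n::finite) chart set \<Rightarrow> ('a \<Rightarrow> real) \<Rightarrow> bool" where
  "smooth_fun A F \<longleftrightarrow> (\<forall>c\<in>A. smooth_on (snd c ` fst c) (loc c F))"

text \<open>First and second derivative in coordinates: dF(X) and (nabla_X nabla F)(V);
  in affine coordinates the connection has vanishing Christoffel symbols.\<close>
definition D1 :: "(real^'n \<Rightarrow> real) \<Rightarrow> real^'n \<Rightarrow> real^'n \<Rightarrow> real" where
  "D1 f y \<xi> = frechet_derivative f (at y) \<xi>"

definition D2 :: "(real^'n \<Rightarrow> real) \<Rightarrow> real^'n \<Rightarrow> real^'n \<Rightarrow> real^'n \<Rightarrow> real" where
  "D2 f y \<xi> v = frechet_derivative (\<lambda>z. D1 f z \<xi>) (at y) v"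

definition condition_N :: "('a::topological_space, 'n::finite) chart set \<Rightarrow> ('a \<Rightarrow> real) \<Rightarrow> 'a \<Rightarrow> bool" where
  "condition_N A F b \<longleftrightarrow>
     (\<forall>c\<in>A. b \<in> fst c \<longrightarrow>
        (\<forall>\<xi>. D1 (loc c F) (snd c b) \<xi> = 0 \<and> (\<forall>v. D2 (loc c F) (snd c b) \<xi> v = 0) \<longrightarrow> \<xi> = 0))"

text \<open>A vector field on Ob is given by its components X c x in each chart c
  (for x in Ob and in the chart domain), compatible under chart changes.\<close>
definition vector_field_on :: "('a::topological_space, 'n::finite) chart set \<Rightarrow> 'a set \<Rightarrow>
    (('a,'n) chart \<Rightarrow> 'a \<Rightarrow> real^'n) \<Rightarrow> bool" where
  "vector_field_on A Ob X \<longleftrightarrow>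
     (\<forall>c1\<in>A. \<forall>c2\<in>A. \<forall>x\<in>Ob \<inter> fst c1 \<inter> fst c2.
        X c2 x = frechet_derivative (snd c2 \<circ> inv_into (fst c1) (snd c1)) (at (snd c1 x)) (X c1 x))"

definition parallel_on :: "('a::topological_space, 'n::finite) chart set \<Rightarrow> 'a set \<Rightarrow>
    (('a,'n) chart \<Rightarrow> 'a \<Rightarrow> real^'n) \<Rightarrow> bool" where
  "parallel_on A Ob X \<longleftrightarrow> vector_field_on A Ob X \<and>
     (\<forall>c\<in>A. \<forall>x\<in>Ob \<inter> fst c. \<exists>W. open W \<and> x \<in> W \<and> (\<forall>y\<in>W \<inter> Ob \<inter> fst c. X c y = X c x))"

definition nonvanishing_on :: "('a, 'n::finite) chart set \<Rightarrow> 'a set \<Rightarrow>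
    (('a,'n) chart \<Rightarrow> 'a \<Rightarrow> real^'n) \<Rightarrow> bool" where
  "nonvanishing_on A Ob X \<longleftrightarrow> (\<forall>c\<in>A. \<forall>x\<in>Ob \<inter> fst c. X c x \<noteq> 0)"

text \<open>Omega_X = dF(X), computed in a chart containing the point (independent of the choice).\<close>
definition Omega :: "('a, 'n::finite) chart set \<Rightarrow> ('a \<Rightarrow> real) \<Rightarrow>
    (('a,'n) chart \<Rightarrow> 'a \<Rightarrow> real^'n) \<Rightarrow> 'a \<Rightarrow> real" where
  "Omega A F X x = (let c = (SOME c. c \<in> A \<and> x \<in> fst c) in D1 (loc c F) (snd c x) (X c x))"

definition resonant_set :: "('a, 'n::finite) chart set \<Rightarrow> ('a \<Rightarrow> real) \<Rightarrow> 'a set \<Rightarrow>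
    (('a,'n) chart \<Rightarrow> 'a \<Rightarrow> real^'n) \<Rightarrow> 'a set" where
  "resonant_set A F Ob X = {c\<in>Ob. Omega A F X c = 0}"

definition regular_resonant :: "('a::topological_space, 'n::finite) chart set \<Rightarrow> ('a \<Rightarrow> real) \<Rightarrow> bool" where
  "regular_resonant A F \<longleftrightarrow>
     (\<forall>Ob X. open Ob \<longrightarrow> parallel_on A Ob X \<longrightarrow> nonvanishing_on A Ob X \<longrightarrow>
        (\<forall>b\<in>resonant_set A F Ob X. \<forall>c\<in>A. b \<in> fst c \<longrightarrow>
           frechet_derivative (loc c (Omega A F X)) (at (snd c b)) \<noteq> (\<lambda>_. 0)))"

end

(* In an affine chart the Christoffel symbols vanish, so a parallel field X has locally
   constant components \<xi> and, near a point b, Omega_X is the coordinate function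
   z \<mapsto> dF_z(\<xi>); its differential at b is therefore v \<mapsto> (\<nabla>_\<xi>\<nabla>F)(v).
   Thus at a resonant point b of a nonvanishing parallel field, d(Omega_X)_b = 0 says precisely
   that X_b is a nonzero vector of ker dF_b with \<nabla>_X\<nabla>F = 0 at b, which Condition N forbids.
   Conversely, a nonzero such vector \<xi> at b extends to the parallel field with constant
   components \<xi> in one chart around b; b is resonant for it and d(Omega)_b = 0. *)

theory Submission
  imports Defs
begin

lemma affine_atlas_chartD:
  assumes "affine_atlas A" "c \<in> A"
  shows "open (fst c)" "open (snd c ` fst c)" "inj_on (snd c) (fst c)"
    "homeomorphism (fst c) (snd c ` fst c) (snd c) (inv_into (fst c) (snd c))"
  using assms unfolding affine_atlas_def homeomorphism_def
  by (auto simp: case_prod_unfold inj_on_def) (metis)+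

lemma affine_atlas_covers: "affine_atlas A \<Longrightarrow> \<exists>c\<in>A. x \<in> fst c"
  unfolding affine_atlas_def by blast

lemma affine_atlas_transitionD:
  assumes "affine_atlas A" "c1 \<in> A" "c2 \<in> A" "x \<in> fst c1 \<inter> fst c2"
  obtains W L k where "open W" "x \<in> W" "linear L" "bij L"
    "\<And>y. y \<in> W \<inter> fst c1 \<inter> fst c2 \<Longrightarrow> snd c2 y = L (snd c1 y) + k"
proof -
  have "\<forall>c1\<in>A. \<forall>c2\<in>A. \<forall>x\<in>fst c1 \<inter> fst c2.
          \<exists>W L k. open W \<and> x \<in> W \<and> linear L \<and> bij L \<and>
         (\<forall>y\<in>W \<inter> fst c1 \<inter> fst c2. snd c2 y = L (snd c1 y) + k)"
    using assms(1) unfolding affine_atlas_def case_prod_unfold by (elim conjE)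
  from bspec[OF bspec[OF bspec[OF this assms(2)] assms(3)] assms(4)]
  obtain W L k where "open W" "x \<in> W" "linear L" "bij L"
    "\<forall>y\<in>W \<inter> fst c1 \<inter> fst c2. snd c2 y = L (snd c1 y) + k"
    by blast
  then show ?thesis by (intro that) auto
qed

lemma open_chart_image:
  assumes "affine_atlas A" "c \<in> A" "open V" "V \<subseteq> fst c"
  shows "open (snd c ` V)"
proof -
  have "openin (top_of_set (snd c ` fst c)) (snd c ` V)"
    using homeomorphism_imp_open_map[OF affine_atlas_chartD(4)[OF assms(1,2)]] assms(3,4)
    by (metis inf.absorb_iff2 openin_open_Int)
  then show ?thesis
    using affine_atlas_chartD(2)[OF assms(1,2)] openin_open_trans by blast
qed

lemma chart_inv_apply:
  "affine_atlas A \<Longrightarrow> c \<in> A \<Longrightarrow> x \<in> fst c \<Longrightarrow> inv_into (fst c) (snd c) (snd c x) = x"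
  by (simp add: affine_atlas_chartD(3))

lemma loc_apply: "affine_atlas A \<Longrightarrow> c \<in> A \<Longrightarrow> x \<in> fst c \<Longrightarrow> loc c F (snd c x) = F x"
  by (simp add: loc_def chart_inv_apply)

lemma has_derivative_transform_in_chart:
  assumes "(f has_derivative f') (at (snd c x))"
    and "affine_atlas A" "c \<in> A" "open V" "V \<subseteq> fst c" "x \<in> V"
    and "\<And>y. y \<in> V \<Longrightarrow> f (snd c y) = g (snd c y)"
  shows "(g has_derivative f') (at (snd c x))"
  using has_derivative_transform_within_open[OF assms(1) open_chart_image[OF assms(2-5)]] assms(6,7)
  by blast

definition transition :: "('a, 'n::finite) chart \<Rightarrow> ('a, 'n) chart \<Rightarrow> real^'n \<Rightarrow> real^'n" where
  "transition c1 c2 = snd c2 \<circ> inv_into (fst c1) (snd c1)"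

lemma transition_apply:
  "affine_atlas A \<Longrightarrow> c1 \<in> A \<Longrightarrow> x \<in> fst c1 \<Longrightarrow> transition c1 c2 (snd c1 x) = snd c2 x"
  by (simp add: transition_def chart_inv_apply)

lemma transition_has_derivative_locally_constant:
  assumes at: "affine_atlas A" and c: "c1 \<in> A" "c2 \<in> A" and x: "x \<in> fst c1 \<inter> fst c2"
  obtains W L where "open W" "x \<in> W" "linear L" "bij L"
    "\<And>y. y \<in> W \<inter> fst c1 \<inter> fst c2 \<Longrightarrow> (transition c1 c2 has_derivative L) (at (snd c1 y))"
proof -
  obtain W L k where W: "open W" "x \<in> W" "linear L" "bij L"
    and affine: "\<And>y. y \<in> W \<inter> fst c1 \<inter> fst c2 \<Longrightarrow> snd c2 y = L (snd c1 y) + k"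
    using affine_atlas_transitionD[OF at c x] by blast
  have dL: "(transition c1 c2 has_derivative L) (at (snd c1 y))" if y: "y \<in> W \<inter> fst c1 \<inter> fst c2" for y
  proof (rule has_derivative_transform_in_chart[OF _ at c(1) _ _ y])
    show "open (W \<inter> fst c1 \<inter> fst c2)"
      using W(1) affine_atlas_chartD(1)[OF at] c by blast
    show "((\<lambda>z. L z + k) has_derivative L) (at (snd c1 y))"
      using W(3) by (simp add: has_derivative_add_const bounded_linear_imp_has_derivative
          linear_conv_bounded_linear)
  qed (auto simp: affine transition_apply[OF at c(1)])
  show ?thesis
    by (rule that[OF W(1-4) dL])
qed

lemma transition_has_frechet_derivative:
  assumes at: "affine_atlas A" and c: "c1 \<in> A" "c2 \<in> A" and x: "x \<in> fst c1 \<inter> fst c2"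
  shows "(transition c1 c2 has_derivative frechet_derivative (transition c1 c2) (at (snd c1 x)))
    (at (snd c1 x))"
proof (rule transition_has_derivative_locally_constant[OF at c x])
  fix W L
  assume "x \<in> W"
    and "\<And>y. y \<in> W \<inter> fst c1 \<inter> fst c2 \<Longrightarrow> (transition c1 c2 has_derivative L) (at (snd c1 y))"
  with x have d: "(transition c1 c2 has_derivative L) (at (snd c1 x))"
    by blast
  with frechet_derivative_at[OF d] show ?thesis
    by simp
qed

lemma transition_self_has_derivative:
  assumes at: "affine_atlas A" and c: "c \<in> A" and x: "x \<in> fst c"
  shows "(transition c c has_derivative (\<lambda>h. h)) (at (snd c x))"
  by (rule has_derivative_transform_in_chart[OF _ at c _ _ x])
     (auto simp: affine_atlas_chartD(1)[OF at c] transition_apply[OF at c])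

lemma frechet_derivative_transition_trans:
  assumes at: "affine_atlas A" and c: "c0 \<in> A" "c1 \<in> A" "c2 \<in> A"
    and x: "x \<in> fst c0 \<inter> fst c1 \<inter> fst c2"
  shows "frechet_derivative (transition c0 c2) (at (snd c0 x)) =
    frechet_derivative (transition c1 c2) (at (snd c1 x)) \<circ>
    frechet_derivative (transition c0 c1) (at (snd c0 x))"
proof -
  define L01 where "L01 = frechet_derivative (transition c0 c1) (at (snd c0 x))"
  define L12 where "L12 = frechet_derivative (transition c1 c2) (at (snd c1 x))"
  have d01: "(transition c0 c1 has_derivative L01) (at (snd c0 x))"
    unfolding L01_def using transition_has_frechet_derivative[OF at c(1,2)] x by blast
  have d12: "(transition c1 c2 has_derivative L12) (at (snd c1 x))"
    unfolding L12_def using transition_has_frechet_derivative[OF at c(2,3)] x by blast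
  then have "(transition c1 c2 has_derivative L12) (at (transition c0 c1 (snd c0 x)))"
    using x by (simp add: transition_apply[OF at c(1)])
  from diff_chain_at[OF d01 this]
  have "(transition c0 c2 has_derivative L12 \<circ> L01) (at (snd c0 x))"
  proof (rule has_derivative_transform_in_chart[OF _ at c(1) _ _ x])
    show "open (fst c0 \<inter> fst c1 \<inter> fst c2)"
      using affine_atlas_chartD(1)[OF at] c by blast
  qed (auto simp: transition_apply[OF at c(1)] transition_apply[OF at c(2)])
  then have "L12 \<circ> L01 = frechet_derivative (transition c0 c2) (at (snd c0 x))"
    by (rule frechet_derivative_at)
  then show ?thesis
    unfolding L01_def L12_def by simp
qed

lemma smooth_fun_loc_differentiable:
  assumes at: "affine_atlas A" and F: "smooth_fun A F" and c: "c \<in> A" and x: "x \<in> fst c"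
  shows "loc c F differentiable at (snd c x)"
    and "(\<lambda>z. D1 (loc c F) z \<xi>) differentiable at (snd c x)"
proof -
  have Ck: "Ck_on k (snd c ` fst c) (loc c F)" for k
    using F c unfolding smooth_fun_def smooth_on_def by blast
  have "loc c F differentiable_on snd c ` fst c"
    using Ck[of 1] by simp
  moreover have "(\<lambda>z. D1 (loc c F) z \<xi>) differentiable_on snd c ` fst c"
    using Ck[of 2] by (simp add: numeral_2_eq_2 D1_def)
  ultimately show "loc c F differentiable at (snd c x)"
    "(\<lambda>z. D1 (loc c F) z \<xi>) differentiable at (snd c x)"
    using differentiable_on_eq_differentiable_at[OF affine_atlas_chartD(2)[OF at c]] x by blast+
qed

lemma D1_loc_transition:
  assumes at: "affine_atlas A" and c: "c1 \<in> A" "c2 \<in> A" and x: "x \<in> fst c1 \<inter> fst c2"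
    and F: "loc c2 F differentiable at (snd c2 x)"
  shows "D1 (loc c1 F) (snd c1 x) \<xi> =
    D1 (loc c2 F) (snd c2 x) (frechet_derivative (transition c1 c2) (at (snd c1 x)) \<xi>)"
proof -
  define L where "L = frechet_derivative (transition c1 c2) (at (snd c1 x))"
  have dT: "(transition c1 c2 has_derivative L) (at (snd c1 x))"
    unfolding L_def using transition_has_frechet_derivative[OF at c] x by blast
  let ?D = "frechet_derivative (loc c2 F) (at (snd c2 x))"
  have "(loc c2 F has_derivative ?D) (at (transition c1 c2 (snd c1 x)))"
    using F x frechet_derivative_works by (auto simp: transition_apply[OF at c(1)])
  from diff_chain_at[OF dT this]
  have "(loc c1 F has_derivative ?D \<circ> L) (at (snd c1 x))"
  proof (rule has_derivative_transform_in_chart[OF _ at c(1) _ _ x])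
    show "open (fst c1 \<inter> fst c2)"
      using affine_atlas_chartD(1)[OF at] c by blast
  qed (auto simp: transition_apply[OF at c(1)] loc_apply[OF at c(1)] loc_apply[OF at c(2)])
  then have "?D \<circ> L = frechet_derivative (loc c1 F) (at (snd c1 x))"
    by (rule frechet_derivative_at)
  then show ?thesis
    unfolding D1_def L_def by (metis comp_apply)
qed

lemma D1_vector_field_chart_invariant:
  assumes at: "affine_atlas A" and F: "smooth_fun A F" and X: "vector_field_on A Ob X"
    and c: "c1 \<in> A" "c2 \<in> A" and x: "x \<in> Ob \<inter> fst c1 \<inter> fst c2"
  shows "D1 (loc c1 F) (snd c1 x) (X c1 x) = D1 (loc c2 F) (snd c2 x) (X c2 x)"
proof -
  have "X c2 x = frechet_derivative (transition c1 c2) (at (snd c1 x)) (X c1 x)"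
    using X c x unfolding vector_field_on_def transition_def by blast
  then show ?thesis
    using D1_loc_transition[OF at c _ smooth_fun_loc_differentiable(1)[OF at F c(2)]] x by simp
qed

lemma Omega_in_chart:
  assumes at: "affine_atlas A" and F: "smooth_fun A F" and X: "vector_field_on A Ob X"
    and c: "c \<in> A" and x: "x \<in> Ob \<inter> fst c"
  shows "Omega A F X x = D1 (loc c F) (snd c x) (X c x)"
proof -
  define c' where "c' = (SOME c. c \<in> A \<and> x \<in> fst c)"
  have "c' \<in> A \<and> x \<in> fst c'"
    unfolding c'_def by (rule someI_ex) (use affine_atlas_covers[OF at, of x] in blast)
  then show ?thesis
    unfolding Omega_def c'_def[symmetric] Let_def
    using D1_vector_field_chart_invariant[OF at F X _ c] x by blast
qed

lemma loc_Omega_has_derivative: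
  assumes at: "affine_atlas A" and F: "smooth_fun A F" and X: "vector_field_on A Ob X"
    and Ob: "open Ob" and c: "c \<in> A" and b: "b \<in> Ob \<inter> fst c"
    and W: "open W" "b \<in> W" "\<And>y. y \<in> W \<inter> Ob \<inter> fst c \<Longrightarrow> X c y = \<xi>"
  shows "(loc c (Omega A F X) has_derivative D2 (loc c F) (snd c b) \<xi>) (at (snd c b))"
proof -
  let ?g = "\<lambda>z. D1 (loc c F) z \<xi>"
  have "(?g has_derivative D2 (loc c F) (snd c b) \<xi>) (at (snd c b))"
    using smooth_fun_loc_differentiable(2)[OF at F c, of b \<xi>] b frechet_derivative_works
    unfolding D2_def[abs_def] by auto
  then show ?thesis
  proof (rule has_derivative_transform_in_chart[OF _ at c])
    show "open (W \<inter> Ob \<inter> fst c)"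
      using W(1) Ob affine_atlas_chartD(1)[OF at c] by blast
    fix y assume y: "y \<in> W \<inter> Ob \<inter> fst c"
    then have "loc c (Omega A F X) (snd c y) = D1 (loc c F) (snd c y) (X c y)"
      using loc_apply[OF at c] Omega_in_chart[OF at F X c] by simp
    with y W(3) show "?g (snd c y) = loc c (Omega A F X) (snd c y)" by simp
  qed (use b W in auto)
qed

lemma condition_N_imp_regular_resonant:
  assumes at: "affine_atlas A" and F: "smooth_fun A F" and N: "\<forall>b. condition_N A F b"
  shows "regular_resonant A F"
  unfolding regular_resonant_def
proof (intro allI impI ballI)
  fix Ob X b c
  assume Ob: "open Ob" and par: "parallel_on A Ob X" and nv: "nonvanishing_on A Ob X"
    and bR: "b \<in> resonant_set A F Ob X" and c: "c \<in> A" and bc: "b \<in> fst c"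
  have X: "vector_field_on A Ob X" using par unfolding parallel_on_def by blast
  have b: "b \<in> Ob \<inter> fst c" and Omega_b: "Omega A F X b = 0"
    using bR bc unfolding resonant_set_def by auto
  obtain W where W: "open W" "b \<in> W" "\<And>y. y \<in> W \<inter> Ob \<inter> fst c \<Longrightarrow> X c y = X c b"
    using par c b unfolding parallel_on_def by blast
  have d: "(loc c (Omega A F X) has_derivative D2 (loc c F) (snd c b) (X c b)) (at (snd c b))"
    by (rule loc_Omega_has_derivative[OF at F X Ob c b W])
  show "frechet_derivative (loc c (Omega A F X)) (at (snd c b)) \<noteq> (\<lambda>_. 0)"
  proof
    assume "frechet_derivative (loc c (Omega A F X)) (at (snd c b)) = (\<lambda>_. 0)"
    then have "\<forall>v. D2 (loc c F) (snd c b) (X c b) v = 0"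
      using frechet_derivative_at[OF d] by simp
    moreover have "D1 (loc c F) (snd c b) (X c b) = 0"
      using Omega_in_chart[OF at F X c b] Omega_b by simp
    ultimately have "X c b = 0"
      using N c bc unfolding condition_N_def by blast
    with nv c b show False
      unfolding nonvanishing_on_def by blast
  qed
qed

definition chart_constant_field ::
    "('a, 'n::finite) chart \<Rightarrow> real^'n \<Rightarrow> ('a, 'n) chart \<Rightarrow> 'a \<Rightarrow> real^'n" where
  "chart_constant_field c0 \<xi> c y = frechet_derivative (transition c0 c) (at (snd c0 y)) \<xi>"

lemma chart_constant_field_locally_constant:
  assumes at: "affine_atlas A" and c: "c0 \<in> A" "c \<in> A" and x: "x \<in> fst c0 \<inter> fst c"
  obtains W L where "open W" "x \<in> W" "linear L" "bij L"
    "\<And>y. y \<in> W \<inter> fst c0 \<inter> fst c \<Longrightarrow> chart_constant_field c0 \<xi> c y = L \<xi>"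
proof (rule transition_has_derivative_locally_constant[OF at c x])
  fix W L
  assume W: "open W" "x \<in> W" "linear L" "bij L"
    and dL: "\<And>y. y \<in> W \<inter> fst c0 \<inter> fst c \<Longrightarrow>
      (transition c0 c has_derivative L) (at (snd c0 y))"
  show ?thesis
  proof (rule that[OF W])
    fix y assume "y \<in> W \<inter> fst c0 \<inter> fst c"
    from frechet_derivative_at[OF dL[OF this]] show "chart_constant_field c0 \<xi> c y = L \<xi>"
      unfolding chart_constant_field_def by simp
  qed
qed

lemma chart_constant_field_base:
  "affine_atlas A \<Longrightarrow> c0 \<in> A \<Longrightarrow> y \<in> fst c0 \<Longrightarrow> chart_constant_field c0 \<xi> c0 y = \<xi>"
  unfolding chart_constant_field_def
  using frechet_derivative_at[OF transition_self_has_derivative] by (metis)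

lemma chart_constant_field_vector_field:
  assumes at: "affine_atlas A" and c0: "c0 \<in> A"
  shows "vector_field_on A (fst c0) (chart_constant_field c0 \<xi>)"
  unfolding vector_field_on_def
proof (intro ballI)
  fix c1 c2 x assume c: "c1 \<in> A" "c2 \<in> A" and x: "x \<in> fst c0 \<inter> fst c1 \<inter> fst c2"
  show "chart_constant_field c0 \<xi> c2 x =
    frechet_derivative (snd c2 \<circ> inv_into (fst c1) (snd c1)) (at (snd c1 x))
      (chart_constant_field c0 \<xi> c1 x)"
    using frechet_derivative_transition_trans[OF at c0 c x]
    unfolding chart_constant_field_def transition_def by simp
qed

lemma chart_constant_field_parallel:
  assumes at: "affine_atlas A" and c0: "c0 \<in> A"
  shows "parallel_on A (fst c0) (chart_constant_field c0 \<xi>)"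
  unfolding parallel_on_def
proof (intro conjI chart_constant_field_vector_field[OF at c0] ballI)
  fix c x assume c: "c \<in> A" and x: "x \<in> fst c0 \<inter> fst c"
  obtain W L where "open W" "x \<in> W"
    and const: "\<And>y. y \<in> W \<inter> fst c0 \<inter> fst c \<Longrightarrow> chart_constant_field c0 \<xi> c y = L \<xi>"
    using chart_constant_field_locally_constant[OF at c0 c x] by metis
  with x show "\<exists>W. open W \<and> x \<in> W \<and>
      (\<forall>y\<in>W \<inter> fst c0 \<inter> fst c. chart_constant_field c0 \<xi> c y = chart_constant_field c0 \<xi> c x)"
    by auto
qed

lemma chart_constant_field_nonvanishing:
  assumes at: "affine_atlas A" and c0: "c0 \<in> A" and "\<xi> \<noteq> 0"
  shows "nonvanishing_on A (fst c0) (chart_constant_field c0 \<xi>)"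
  unfolding nonvanishing_on_def
proof (intro ballI)
  fix c x assume c: "c \<in> A" and x: "x \<in> fst c0 \<inter> fst c"
  obtain W L where "x \<in> W" "linear L" "bij L"
    and const: "\<And>y. y \<in> W \<inter> fst c0 \<inter> fst c \<Longrightarrow> chart_constant_field c0 \<xi> c y = L \<xi>"
    using chart_constant_field_locally_constant[OF at c0 c x] by metis
  moreover have "L \<xi> \<noteq> 0"
    using \<open>\<xi> \<noteq> 0\<close> \<open>linear L\<close> \<open>bij L\<close> by (metis bij_is_inj linear_0 inj_eq)
  ultimately show "chart_constant_field c0 \<xi> c x \<noteq> 0"
    using x by simp
qed

lemma regular_resonant_imp_condition_N:
  assumes at: "affine_atlas A" and F: "smooth_fun A F" and R: "regular_resonant A F"
  shows "condition_N A F b"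
  unfolding condition_N_def
proof (intro ballI impI allI)
  fix c0 \<xi>
  assume c0: "c0 \<in> A" and b: "b \<in> fst c0"
    and crit: "D1 (loc c0 F) (snd c0 b) \<xi> = 0 \<and> (\<forall>v. D2 (loc c0 F) (snd c0 b) \<xi> v = 0)"
  show "\<xi> = 0"
  proof (rule ccontr)
    assume "\<xi> \<noteq> 0"
    let ?X = "chart_constant_field c0 \<xi>"
    have X: "vector_field_on A (fst c0) ?X"
      by (rule chart_constant_field_vector_field[OF at c0])
    have X_c0: "\<And>y. y \<in> fst c0 \<Longrightarrow> ?X c0 y = \<xi>"
      by (rule chart_constant_field_base[OF at c0])
    have "b \<in> resonant_set A F (fst c0) ?X"
      using Omega_in_chart[OF at F X c0, of b] X_c0 b crit unfolding resonant_set_def by simp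
    then have "frechet_derivative (loc c0 (Omega A F ?X)) (at (snd c0 b)) \<noteq> (\<lambda>_. 0)"
      using R affine_atlas_chartD(1)[OF at c0] chart_constant_field_parallel[OF at c0]
        chart_constant_field_nonvanishing[OF at c0 \<open>\<xi> \<noteq> 0\<close>] c0 b
      unfolding regular_resonant_def by blast
    moreover have
      "(loc c0 (Omega A F ?X) has_derivative D2 (loc c0 F) (snd c0 b) \<xi>) (at (snd c0 b))"
      by (rule loc_Omega_has_derivative[OF at F X affine_atlas_chartD(1)[OF at c0] c0, of b UNIV])
        (use b X_c0 in auto)
    ultimately show False
      using frechet_derivative_at crit by fastforce
  qed
qed

theorem mainTheorem4:
  fixes A :: "('a::{t2_space, second_countable_topology}, 'n::finite) chart set"
    and F :: "'a \<Rightarrow> real"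
  assumes "affine_atlas A"
    and "smooth_fun A F"
  shows "(\<forall>b. condition_N A F b) \<longleftrightarrow> regular_resonant A F"
  using condition_N_imp_regular_resonant[OF assms] regular_resonant_imp_condition_N[OF assms]
  by blast

end
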